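(* Let $T$ be an aperiodic invertible measure-preserving transformation of a standard probability space $(X,\mu)$, let $U$ be the unitary operator on $L^2(X,\mu)$ given by $Uf=f\circ T$, and let $\{n_k\}$ be any sequence of positive integers with $n_k\to\infty$. Then $U^{n_k}$ does not converge to the identity $I$ in operator norm, and the Ces\`aro averages $\frac1k\sum_{i=1}^k U^{n_i}$ do not converge to $I$ in operator norm.
   Context: $T$ is aperiodic if the set of periodic points of $T$ has measure zero. *)

theory Defs
  imports "HOL-Probability.Probability"
begin

definition standard_prob_space :: "'a::polish_space measure \<Rightarrow> bool" where
  "standard_prob_space M \<longleftrightarrow> prob_space M \<and> sets M = sets borel"

definition invertible_mpt :: "'a measure \<Rightarrow> ('a \<Rightarrow> 'a) \<Rightarrow> bool" where
  "invertible_mpt M T \<longleftrightarrow>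
     T \<in> measurable M M \<and> bij_betw T (space M) (space M) \<and>
     the_inv_into (space M) T \<in> measurable M M \<and> distr M M T = M"

definition periodic_points :: "'a measure \<Rightarrow> ('a \<Rightarrow> 'a) \<Rightarrow> 'a set" where
  "periodic_points M T = {x \<in> space M. \<exists>n>0. (T ^^ n) x = x}"

definition aperiodic :: "'a measure \<Rightarrow> ('a \<Rightarrow> 'a) \<Rightarrow> bool" where
  "aperiodic M T \<longleftrightarrow> periodic_points M T \<in> null_sets M"

definition L2 :: "'a measure \<Rightarrow> ('a \<Rightarrow> complex) set" where
  "L2 M = {f. f \<in> borel_measurable M \<and> integrable M (\<lambda>x. (cmod (f x))\<^sup>2)}"

definition L2_norm :: "'a measure \<Rightarrow> ('a \<Rightarrow> complex) \<Rightarrow> real" where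
  "L2_norm M f = sqrt (\<integral>x. (cmod (f x))\<^sup>2 \<partial>M)"

definition L2_opnorm :: "'a measure \<Rightarrow> (('a \<Rightarrow> complex) \<Rightarrow> ('a \<Rightarrow> complex)) \<Rightarrow> real" where
  "L2_opnorm M A = (SUP f \<in> {f \<in> L2 M. L2_norm M f \<le> 1}. L2_norm M (A f))"

definition koopman :: "('a \<Rightarrow> 'a) \<Rightarrow> ('a \<Rightarrow> complex) \<Rightarrow> ('a \<Rightarrow> complex)" where
  "koopman T f = f \<circ> T"

end

theory Submission imports Defs begin

(* Let A = c * (sum over i in I of U^(m i)) - I with finitely many positive
   exponents m i and |c| <= 1; both operators of the theorem have this shape.  Since T is
   aperiodic, a Rokhlin-type argument produces a set B of positive measure such that
   T^j B and B are disjoint for all 1 <= j <= N, where N bounds the exponents: a point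
   that is not fixed by S = T^j can be separated from S x by a pair of basic open sets,
   and these countably many pieces exhaust B up to the null set of periodic points.
   For the normalised indicator f of B, every U^(m i) f vanishes on B, so A f agrees
   with -f on B and ||A f|| >= 1.  As A is bounded on the unit ball, its operator norm
   is at least 1.  Hence neither sequence of operator norms in the theorem tends to 0;
   in fact every term is at least 1. *)

lemma koopman_funpow: "(koopman T ^^ m) f = f \<circ> (T ^^ m)"
proof (induction m)
  case (Suc m)
  have "(koopman T ^^ Suc m) f = koopman T ((koopman T ^^ m) f)" by simp
  also have "\<dots> = f \<circ> (T ^^ m \<circ> T)" by (simp only: Suc koopman_def comp_assoc)
  finally show ?case by (simp only: funpow_Suc_right)
qed simp

text \<open>A lower bound for the operator norm, witnessed by a single vector in the unit ball;
  boundedness of the operator on the unit ball makes the supremum finite.\<close>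
lemma L2_opnorm_ge:
  assumes "\<And>g. g \<in> L2 M \<Longrightarrow> L2_norm M g \<le> 1 \<Longrightarrow> L2_norm M (A g) \<le> K"
    and "f \<in> L2 M" "L2_norm M f \<le> 1" "c \<le> L2_norm M (A f)"
  shows "c \<le> L2_opnorm M A"
  unfolding L2_opnorm_def
  by (rule cSUP_upper2[where x=f]) (use assms in \<open>auto intro!: bdd_aboveI2\<close>)

lemma countable_separating_pairs:
  obtains P :: "('a::{second_countable_topology,t2_space} set \<times> 'a set) set"
  where "countable P" "\<And>U V. (U, V) \<in> P \<Longrightarrow> open U \<and> open V \<and> U \<inter> V = {}"
    "\<And>x y. x \<noteq> y \<Longrightarrow> \<exists>(U, V)\<in>P. x \<in> U \<and> y \<in> V"
proof -
  obtain BB :: "'a set set" where BB: "countable BB" "topological_basis BB"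
    using ex_countable_basis by blast
  define P where "P = {(U, V). U \<in> BB \<and> V \<in> BB \<and> U \<inter> V = {}}"
  have "countable P"
    unfolding P_def by (rule countable_subset[of _ "BB \<times> BB"]) (auto simp: BB)
  moreover have "open U \<and> open V \<and> U \<inter> V = {}" if "(U, V) \<in> P" for U V
    using that BB(2) topological_basis_open unfolding P_def by auto
  moreover have "\<exists>(U, V)\<in>P. x \<in> U \<and> y \<in> V" if xy: "x \<noteq> y" for x y
  proof -
    obtain U' V' where UV': "open U'" "open V'" "x \<in> U'" "y \<in> V'" "U' \<inter> V' = {}"
      using hausdorff[OF xy] by metis
    obtain U where U: "U \<in> BB" "x \<in> U" "U \<subseteq> U'"
      using topological_basisE[OF BB(2) UV'(1,3)] by metis
    obtain V where V: "V \<in> BB" "y \<in> V" "V \<subseteq> V'"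
      using topological_basisE[OF BB(2) UV'(2,4)] by metis
    have "(U, V) \<in> P" unfolding P_def using U(1,3) V(1,3) UV'(5) by auto
    then show ?thesis using U(2) V(2) by blast
  qed
  ultimately show thesis by (rule that)
qed

lemma wandering_subset:
  fixes M :: "'a::{second_countable_topology,t2_space} measure"
  assumes sets_M: "sets M = sets borel" and S: "S \<in> measurable M M"
    and AE_moves: "AE x in M. S x \<noteq> x"
    and B: "B \<in> sets M" "B \<notin> null_sets M"
  shows "\<exists>C\<in>sets M. C \<subseteq> B \<and> C \<notin> null_sets M \<and> (\<forall>x\<in>C. S x \<notin> C)"
proof (rule ccontr)
  assume no_wandering: "\<not> ?thesis"
  obtain P :: "('a set \<times> 'a set) set"
    where P: "countable P" "\<And>U V. (U, V) \<in> P \<Longrightarrow> open U \<and> open V \<and> U \<inter> V = {}"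
    "\<And>x y. x \<noteq> y \<Longrightarrow> \<exists>(U, V)\<in>P. x \<in> U \<and> y \<in> V"
    using countable_separating_pairs by blast
  obtain Z where Z: "{x \<in> space M. \<not> S x \<noteq> x} \<subseteq> Z" "emeasure M Z = 0" "Z \<in> sets M"
    by (rule AE_E[OF AE_moves])
  define piece where "piece = (\<lambda>(U, V). B \<inter> U \<inter> (S -` V \<inter> space M))"
  have piece_null: "piece p \<in> null_sets M" if "p \<in> P" for p
  proof -
    obtain U V where p: "p = (U, V)" by fastforce
    have UV: "open U" "open V" "U \<inter> V = {}" using P(2) that p by auto
    then have "U \<in> sets M" "S -` V \<inter> space M \<in> sets M"
      using measurable_sets[OF S, of V] sets_M by simp_all
    then have "piece p \<in> sets M" unfolding p piece_def using B(1) by (simp add: sets.Int)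
    moreover have "piece p \<subseteq> B" "\<forall>x\<in>piece p. S x \<notin> piece p"
      using UV(3) unfolding p piece_def by auto
    ultimately show ?thesis using no_wandering by blast
  qed
  have "B \<subseteq> Z \<union> (\<Union>p\<in>P. piece p)"
  proof
    fix x assume x: "x \<in> B"
    then have x_space: "x \<in> space M" using sets.sets_into_space[OF B(1)] by blast
    show "x \<in> Z \<union> (\<Union>p\<in>P. piece p)"
    proof (cases "S x = x")
      case True then show ?thesis using Z(1) x_space by blast
    next
      case False
      then obtain U V where UV: "(U, V) \<in> P" "x \<in> U" "S x \<in> V"
        using P(3)[of x "S x"] by auto
      then have "x \<in> piece (U, V)" using x x_space unfolding piece_def by simp
      then show ?thesis using UV(1) by blast
    qed
  qed
  moreover have "Z \<union> (\<Union>p\<in>P. piece p) \<in> null_sets M"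
    using Z(2,3) null_sets_UN'[OF P(1) piece_null] by auto
  ultimately show False using B null_sets_subset by blast
qed

lemma norm_scaled_sum_diff_sq:
  fixes a :: "'i \<Rightarrow> complex"
  assumes "cmod c \<le> 1"
  shows "(cmod (c * (\<Sum>i\<in>I. a i) - b))\<^sup>2
           \<le> 2 * real (card I) * (\<Sum>i\<in>I. (cmod (a i))\<^sup>2) + 2 * (cmod b)\<^sup>2"
proof -
  have "cmod (c * (\<Sum>i\<in>I. a i)) \<le> cmod (\<Sum>i\<in>I. a i)"
    using assms by (simp add: norm_mult mult_left_le_one_le)
  also have "\<dots> \<le> (\<Sum>i\<in>I. cmod (a i))" by (rule norm_sum)
  finally have "(cmod (c * (\<Sum>i\<in>I. a i)))\<^sup>2 \<le> (\<Sum>i\<in>I. cmod (a i))\<^sup>2"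
    by (simp add: power_mono)
  also have "\<dots> \<le> (\<Sum>i\<in>I. (cmod (a i))\<^sup>2) * card I"
    by (rule sum_squared_le_sum_of_squares)
  finally have sum_bound: "(cmod (c * (\<Sum>i\<in>I. a i)))\<^sup>2 \<le> real (card I) * (\<Sum>i\<in>I. (cmod (a i))\<^sup>2)"
    by (simp add: mult.commute)
  have "cmod (c * (\<Sum>i\<in>I. a i) - b) \<le> cmod (c * (\<Sum>i\<in>I. a i)) + cmod b"
    by (rule norm_triangle_ineq4)
  then have "(cmod (c * (\<Sum>i\<in>I. a i) - b))\<^sup>2 \<le> (cmod (c * (\<Sum>i\<in>I. a i)) + cmod b)\<^sup>2"
    by (simp add: power_mono)
  also have "\<dots> \<le> 2 * (cmod (c * (\<Sum>i\<in>I. a i)))\<^sup>2 + 2 * (cmod b)\<^sup>2"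
    by (smt (verit) power2_sum sum_squares_bound)
  finally show ?thesis using sum_bound by linarith
qed

definition normalised_indicator :: "'a measure \<Rightarrow> 'a set \<Rightarrow> 'a \<Rightarrow> complex" where
  "normalised_indicator M B = (\<lambda>x. complex_of_real (indicator B x / sqrt (measure M B)))"

lemma (in finite_measure) normalised_indicator_L2:
  assumes B: "B \<in> sets M" "B \<notin> null_sets M"
  defines "f \<equiv> normalised_indicator M B"
  shows "f \<in> L2 M" "L2_norm M f \<le> 1"
    and "\<And>h. integrable M (\<lambda>x. (cmod (h x - f x))\<^sup>2) \<Longrightarrow> \<forall>x\<in>B. h x = 0
           \<Longrightarrow> 1 \<le> L2_norm M (\<lambda>x. h x - f x)"
proof -
  define \<mu> where "\<mu> = measure M B"
  have \<mu>_pos: "\<mu> > 0"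
    using B unfolding \<mu>_def
    by (metis emeasure_eq_measure ennreal_0 measure_nonneg less_eq_real_def null_setsI)
  have f_sq: "(cmod (f x))\<^sup>2 = indicator B x / \<mu>" for x
    using \<mu>_pos unfolding f_def normalised_indicator_def \<mu>_def[symmetric]
    by (simp add: indicator_def power_divide norm_divide)
  have ind_int: "integrable M (\<lambda>x. indicator B x / \<mu> :: real)"
    using B(1) by (intro integrable_divide) (simp add: emeasure_eq_measure)
  have ind_integral: "(\<integral>x. indicator B x / \<mu> \<partial>M) = 1"
    using B(1) \<mu>_pos by (simp add: \<mu>_def)
  have "f \<in> borel_measurable M"
    unfolding f_def normalised_indicator_def using B(1) by measurable
  then show "f \<in> L2 M" unfolding L2_def using ind_int f_sq by simp
  show "L2_norm M f \<le> 1" unfolding L2_norm_def f_sq ind_integral by simp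
  fix h assume h_int: "integrable M (\<lambda>x. (cmod (h x - f x))\<^sup>2)" and h_zero: "\<forall>x\<in>B. h x = 0"
  have "indicator B x / \<mu> \<le> (cmod (h x - f x))\<^sup>2" for x
    using h_zero f_sq[of x] by (cases "x \<in> B") simp_all
  then have "1 \<le> (\<integral>x. (cmod (h x - f x))\<^sup>2 \<partial>M)"
    using integral_mono[OF ind_int h_int] ind_integral by metis
  then show "1 \<le> L2_norm M (\<lambda>x. h x - f x)" unfolding L2_norm_def by simp
qed

locale borel_mps = prob_space M
  for M :: "'a::{second_countable_topology,t2_space} measure" and T :: "'a \<Rightarrow> 'a" +
  assumes sets_M: "sets M = sets borel"
    and T_measurable: "T \<in> measurable M M"
    and T_preserves: "distr M M T = M"
begin

lemma funpow_measurable: "T ^^ j \<in> measurable M M"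
  by (induction j) (auto intro: measurable_compose[OF _ T_measurable])

lemma funpow_preserves: "distr M M (T ^^ j) = M"
proof (induction j)
  case 0 then show ?case by (simp add: distr_id2 sets_M)
next
  case (Suc j)
  have "distr M M (T ^^ Suc j) = distr (distr M M (T ^^ j)) M T"
    by (simp add: distr_distr[OF T_measurable funpow_measurable])
  then show ?case using Suc T_preserves by (simp add: comp_def)
qed

lemma sq_integrable_funpow:
  assumes g: "g \<in> L2 M"
  shows "integrable M (\<lambda>x. (cmod (g ((T ^^ j) x)))\<^sup>2)"
    and "(\<integral>x. (cmod (g ((T ^^ j) x)))\<^sup>2 \<partial>M) = (\<integral>x. (cmod (g x))\<^sup>2 \<partial>M)"
proof -
  have meas: "(\<lambda>x. (cmod (g x))\<^sup>2) \<in> borel_measurable M" and int: "integrable M (\<lambda>x. (cmod (g x))\<^sup>2)"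
    using g unfolding L2_def by auto
  show "integrable M (\<lambda>x. (cmod (g ((T ^^ j) x)))\<^sup>2)"
    using integrable_distr_eq[OF funpow_measurable meas, of j] int funpow_preserves by simp
  show "(\<integral>x. (cmod (g ((T ^^ j) x)))\<^sup>2 \<partial>M) = (\<integral>x. (cmod (g x))\<^sup>2 \<partial>M)"
    using integral_distr[OF funpow_measurable meas, of j] funpow_preserves by simp
qed

lemma scaled_average_bounded:
  assumes g: "g \<in> L2 M" "L2_norm M g \<le> 1" and "cmod c \<le> 1"
  shows "integrable M (\<lambda>x. (cmod (c * (\<Sum>i\<in>I. g ((T ^^ m i) x)) - g x))\<^sup>2)"
    and "L2_norm M (\<lambda>x. c * (\<Sum>i\<in>I. g ((T ^^ m i) x)) - g x) \<le> sqrt (2 * real (card I) ^ 2 + 2)"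
proof -
  define G where "G = (\<integral>x. (cmod (g x))\<^sup>2 \<partial>M)"
  have G_le: "G \<le> 1" using g(2) unfolding L2_norm_def G_def by simp
  define F where
    "F x = 2 * real (card I) * (\<Sum>i\<in>I. (cmod (g ((T ^^ m i) x)))\<^sup>2) + 2 * (cmod (g x))\<^sup>2" for x
  have g_meas: "g \<in> borel_measurable M" and g_int: "integrable M (\<lambda>x. (cmod (g x))\<^sup>2)"
    using g(1) unfolding L2_def by auto
  have F_int: "integrable M F"
    unfolding F_def using sq_integrable_funpow(1)[OF g(1)] g_int
    by (intro Bochner_Integration.integrable_add integrable_mult_right
        Bochner_Integration.integrable_sum) auto
  have F_integral: "integral\<^sup>L M F = 2 * real (card I) ^ 2 * G + 2 * G"
    unfolding F_def G_def using sq_integrable_funpow[OF g(1)] g_int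
    by (simp add: integral_add integrable_sum integral_sum power2_eq_square)
  have pointwise: "(cmod (c * (\<Sum>i\<in>I. g ((T ^^ m i) x)) - g x))\<^sup>2 \<le> F x" for x
    unfolding F_def by (rule norm_scaled_sum_diff_sq[OF assms(3)])
  have "(\<lambda>x. (cmod (c * (\<Sum>i\<in>I. g ((T ^^ m i) x)) - g x))\<^sup>2) \<in> borel_measurable M"
    using g_meas funpow_measurable by measurable
  then show diff_int: "integrable M (\<lambda>x. (cmod (c * (\<Sum>i\<in>I. g ((T ^^ m i) x)) - g x))\<^sup>2)"
    by (rule Bochner_Integration.integrable_bound[OF F_int])
      (use pointwise in \<open>auto intro!: AE_I2 order_trans[OF _ abs_ge_self]\<close>)
  have "(\<integral>x. (cmod (c * (\<Sum>i\<in>I. g ((T ^^ m i) x)) - g x))\<^sup>2 \<partial>M) \<le> integral\<^sup>L M F"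
    by (rule integral_mono[OF diff_int F_int pointwise])
  also have "\<dots> \<le> 2 * real (card I) ^ 2 + 2"
  proof -
    have "real (card I) ^ 2 * G \<le> real (card I) ^ 2" using G_le by (simp add: mult_left_le)
    then show ?thesis unfolding F_integral using G_le by linarith
  qed
  finally show "L2_norm M (\<lambda>x. c * (\<Sum>i\<in>I. g ((T ^^ m i) x)) - g x) \<le> sqrt (2 * real (card I) ^ 2 + 2)"
    unfolding L2_norm_def by simp
qed

lemma disjoint_from_iterates:
  assumes "aperiodic M T"
  shows "\<exists>B\<in>sets M. B \<notin> null_sets M \<and> (\<forall>j\<in>{1..N}. \<forall>x\<in>B. (T ^^ j) x \<notin> B)"
proof (induction N)
  case 0
  have "space M \<notin> null_sets M" using emeasure_space_1 by auto
  then show ?case by auto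
next
  case (Suc N)
  then obtain B where B: "B \<in> sets M" "B \<notin> null_sets M" "\<forall>j\<in>{1..N}. \<forall>x\<in>B. (T ^^ j) x \<notin> B"
    by blast
  have fixed_periodic: "{x \<in> space M. \<not> (T ^^ Suc N) x \<noteq> x} \<subseteq> periodic_points M T"
    unfolding periodic_points_def by blast
  have "AE x in M. (T ^^ Suc N) x \<noteq> x"
    using assms unfolding aperiodic_def by (rule AE_I'[OF _ fixed_periodic])
  then obtain C where C: "C \<in> sets M" "C \<subseteq> B" "C \<notin> null_sets M" "\<forall>x\<in>C. (T ^^ Suc N) x \<notin> C"
    using wandering_subset[OF sets_M funpow_measurable _ B(1,2)] by blast
  have "(T ^^ j) x \<notin> C" if j: "j \<in> {1..Suc N}" and x: "x \<in> C" for j x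
  proof (cases "j = Suc N")
    case True then show ?thesis using C(4) x by blast
  next
    case False
    then have "j \<in> {1..N}" using j by simp
    then show ?thesis using B(3) C(2) x by blast
  qed
  then show ?case using C(1,3) by blast
qed

lemma average_far_from_identity:
  assumes "aperiodic M T" and "finite I" and "\<And>i. i \<in> I \<Longrightarrow> m i > 0" and "cmod c \<le> 1"
  shows "1 \<le> L2_opnorm M (\<lambda>g x. c * (\<Sum>i\<in>I. g ((T ^^ m i) x)) - g x)"
proof -
  define N where "N = Max (m ` I)"
  have N: "m i \<le> N" if "i \<in> I" for i
    unfolding N_def using assms(2) that by (intro Max_ge) simp_all
  obtain B where B: "B \<in> sets M" "B \<notin> null_sets M" "\<forall>j\<in>{1..N}. \<forall>x\<in>B. (T ^^ j) x \<notin> B"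
    using disjoint_from_iterates[OF assms(1)] by blast
  define f where "f = normalised_indicator M B"
  note f = normalised_indicator_L2[OF B(1,2), folded f_def]
  have vanish: "f ((T ^^ m i) x) = 0" if i: "i \<in> I" and x: "x \<in> B" for i x
  proof -
    have "m i \<in> {1..N}" using N[OF i] assms(3)[OF i] by simp
    then have "(T ^^ m i) x \<notin> B" using B(3) x by blast
    then show ?thesis unfolding f_def normalised_indicator_def by simp
  qed
  have far: "1 \<le> L2_norm M (\<lambda>x. c * (\<Sum>i\<in>I. f ((T ^^ m i) x)) - f x)"
  proof (rule f(3))
    show "integrable M (\<lambda>x. (cmod (c * (\<Sum>i\<in>I. f ((T ^^ m i) x)) - f x))\<^sup>2)"
      by (rule scaled_average_bounded(1)[OF f(1,2) assms(4)])
    show "\<forall>x\<in>B. c * (\<Sum>i\<in>I. f ((T ^^ m i) x)) = 0"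
      using vanish by simp
  qed
  show ?thesis
  proof (rule L2_opnorm_ge[where A = "\<lambda>g x. c * (\<Sum>i\<in>I. g ((T ^^ m i) x)) - g x", OF _ f(1,2) far])
    show "L2_norm M (\<lambda>x. c * (\<Sum>i\<in>I. g ((T ^^ m i) x)) - g x) \<le> sqrt (2 * real (card I) ^ 2 + 2)"
      if "g \<in> L2 M" "L2_norm M g \<le> 1" for g
      using scaled_average_bounded(2)[OF that assms(4)] .
  qed
qed

end

theorem mainTheorem5:
  fixes M :: "'a::polish_space measure" and T :: "'a \<Rightarrow> 'a" and n :: "nat \<Rightarrow> nat"
  assumes "standard_prob_space M"
    and "invertible_mpt M T"
    and "aperiodic M T"
    and "\<And>k. n k > 0"
    and "filterlim n at_top sequentially"
  shows "\<not> ((\<lambda>k. L2_opnorm M (\<lambda>f. (koopman T ^^ n k) f - f)) \<longlonglongrightarrow> 0) \<and>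
         \<not> ((\<lambda>k. L2_opnorm M
              (\<lambda>f. (\<lambda>x. (1 / real k) * (\<Sum>i=1..k. (koopman T ^^ n i) f x)) - f)) \<longlonglongrightarrow> 0)"
proof -
  have "prob_space M" "sets M = sets borel"
    using assms(1) unfolding standard_prob_space_def by auto
  moreover have "T \<in> measurable M M" "distr M M T = M"
    using assms(2) unfolding invertible_mpt_def by auto
  ultimately interpret borel_mps M T
    by (intro borel_mps.intro borel_mps_axioms.intro)
  have power_far: "1 \<le> L2_opnorm M (\<lambda>f. (koopman T ^^ n k) f - f)" for k
  proof -
    have "(\<lambda>f. (koopman T ^^ n k) f - f) = (\<lambda>g x. 1 * (\<Sum>i\<in>{k}. g ((T ^^ n i) x)) - g x)"
      by (simp add: koopman_funpow fun_eq_iff)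
    then show ?thesis by (simp only:) (rule average_far_from_identity, use assms in auto)
  qed
  have average_far:
    "1 \<le> L2_opnorm M (\<lambda>f. (\<lambda>x. (1 / real k) * (\<Sum>i=1..k. (koopman T ^^ n i) f x)) - f)" for k
  proof -
    have "(\<lambda>f. (\<lambda>x. (1 / real k) * (\<Sum>i=1..k. (koopman T ^^ n i) f x)) - f)
            = (\<lambda>g x. of_real (1 / real k) * (\<Sum>i\<in>{1..k}. g ((T ^^ n i) x)) - g x)"
      by (simp add: koopman_funpow fun_eq_iff)
    moreover have "cmod (of_real (1 / real k)) \<le> 1"
      unfolding norm_of_real by (cases k) (simp_all add: divide_le_eq)
    ultimately show ?thesis by (simp only:) (rule average_far_from_identity, use assms in auto)
  qed
  have not_tendsto: "\<not> (X \<longlonglongrightarrow> 0)" if "\<And>k. 1 \<le> X k" for X :: "nat \<Rightarrow> real"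
    using LIMSEQ_le_const[of X 0 1] that by auto
  show ?thesis by (intro conjI not_tendsto power_far average_far)
qed

end
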